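(* Let $\Phi:\ell^\infty(\mathbb Z)\to\ell^\infty(\mathbb Z)$ be a linear map commuting with the backward shift $B$, $(Bv)_n=v_{n+1}$. If $\Phi$ is idempotent and contractive, then either $\Phi=\Phi^{s}$ (i.e. $\Phi$ annihilates $c_0(\mathbb Z)$) or $\Phi$ is the identity map.
   Context: For such $\Phi$, let $\phi_0(v)=\Phi(v)_0$, so $\Phi(v)_n=\phi_0(B^nv)$. Write $\phi_0=\phi^{ac}+\phi^s$ with $\phi^{ac}$ weak*-continuous (given by an $\ell^1(\mathbb Z)$ vector) and $\phi^s$ vanishing on $c_0(\mathbb Z)$ (the null sequences), and set $\Phi^{s}(v)=(\phi^s(B^nv))_n$. *)

theory Defs
  imports "HOL-Analysis.Analysis"
begin

definition linf :: "(int \<Rightarrow> complex) set" where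
  "linf = {v. bounded (range v)}"

definition c0 :: "(int \<Rightarrow> complex) set" where
  "c0 = {v. \<forall>e>0. finite {n. norm (v n) \<ge> e}}"

definition supnorm :: "(int \<Rightarrow> complex) \<Rightarrow> real" where
  "supnorm v = (SUP n. norm (v n))"

definition bshift :: "(int \<Rightarrow> complex) \<Rightarrow> (int \<Rightarrow> complex)" where
  "bshift v = (\<lambda>n. v (n + 1))"

text \<open>A linear map on linf (values outside linf are irrelevant).\<close>
definition linear_on_linf :: "((int \<Rightarrow> complex) \<Rightarrow> (int \<Rightarrow> complex)) \<Rightarrow> bool" where
  "linear_on_linf \<Phi> \<longleftrightarrow> (\<forall>v\<in>linf. \<Phi> v \<in> linf) \<and>
     (\<forall>u\<in>linf. \<forall>v\<in>linf. \<Phi> (\<lambda>n. u n + v n) = (\<lambda>n. \<Phi> u n + \<Phi> v n)) \<and>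
     (\<forall>a. \<forall>v\<in>linf. \<Phi> (\<lambda>n. a * v n) = (\<lambda>n. a * \<Phi> v n))"

end

theory Submission
  imports Defs
begin

text \<open>
  A shift-commuting contraction \<open>\<Phi>\<close> acts on finitely supported sequences as convolution with
  \<open>\<kappa> = \<Phi> e\<^sub>0\<close>, and testing contractivity against phase-aligned finite sequences shows
  \<open>\<Sum>|\<kappa> j| \<le> 1\<close>. Since every \<open>v \<in> c\<^sub>0\<close> is uniformly close to a finitely supported sequence,
  \<open>\<kappa> = 0\<close> forces \<open>\<Phi>\<close> to annihilate \<open>c\<^sub>0\<close>. Otherwise idempotence gives \<open>\<kappa> = \<kappa> * \<kappa>\<close> (convolution); at a
  point where \<open>|\<kappa>|\<close> is maximal, the bound \<open>\<Sum>|\<kappa> j| \<le> 1\<close> forces \<open>|\<kappa>|\<close> to be maximal on a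
  translate of the support of \<open>\<kappa>\<close>, so the support is finite, and comparing extreme points of
  the support in \<open>\<kappa> = \<kappa> * \<kappa>\<close> gives \<open>\<kappa> = e\<^sub>0\<close>. Then \<open>\<Phi>\<close> fixes every \<open>e\<^sub>n\<close>, and a contraction
  fixing \<open>e\<^sub>n\<close> cannot move the \<open>n\<close>-th coordinate of any \<open>v\<close>: otherwise a small multiple of
  \<open>v - v\<^sub>n e\<^sub>n\<close>, suitably rotated, added to \<open>e\<^sub>n\<close> would be mapped to a sequence of norm \<open>> 1\<close>.
\<close>

lemma linf_iff: "v \<in> linf \<longleftrightarrow> (\<exists>B. \<forall>n. norm (v n) \<le> B)"
  unfolding linf_def by (auto simp: bounded_iff)

lemma linf_add: "u \<in> linf \<Longrightarrow> v \<in> linf \<Longrightarrow> (\<lambda>n. u n + v n) \<in> linf"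
proof -
  assume "u \<in> linf" "v \<in> linf"
  then obtain A B where "\<forall>n. norm (u n) \<le> A" "\<forall>n. norm (v n) \<le> B" by (auto simp: linf_iff)
  then have "\<forall>n. norm (u n + v n) \<le> A + B" by (meson add_mono norm_triangle_le)
  then show ?thesis by (auto simp: linf_iff)
qed

lemma linf_scale: "v \<in> linf \<Longrightarrow> (\<lambda>n. c * v n) \<in> linf"
proof -
  assume "v \<in> linf"
  then obtain B where "\<forall>n. norm (v n) \<le> B" by (auto simp: linf_iff)
  then have "\<forall>n. norm (c * v n) \<le> norm c * B" by (simp add: mult_left_mono norm_mult)
  then show ?thesis by (auto simp: linf_iff)
qed

lemma linf_diff: "u \<in> linf \<Longrightarrow> v \<in> linf \<Longrightarrow> (\<lambda>n. u n - v n) \<in> linf"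
  using linf_add[of u "\<lambda>n. (-1) * v n"] linf_scale[of v "-1"] by simp

lemma linf_if_bounded_off_finite:
  assumes "finite F" "\<And>m. m \<notin> F \<Longrightarrow> norm (v m) \<le> B" "B \<ge> 0"
  shows "v \<in> linf"
proof -
  have "norm (v m) \<le> B + (\<Sum>j\<in>F. norm (v j))" for m
  proof (cases "m \<in> F")
    case True
    then show ?thesis
      using member_le_sum[of m F "\<lambda>j. norm (v j)"] assms by simp
  next
    case False
    then show ?thesis using assms(2) sum_nonneg[of F "\<lambda>j. norm (v j)"] by force
  qed
  then show ?thesis unfolding linf_iff by blast
qed

lemma c0_subset_linf: "c0 \<subseteq> linf"
proof
  fix v assume "v \<in> c0"
  then have "finite {n. norm (v n) \<ge> 1}" unfolding c0_def by auto
  then show "v \<in> linf" by (rule linf_if_bounded_off_finite[where B = 1]) auto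
qed

lemma supnorm_upper: "v \<in> linf \<Longrightarrow> norm (v n) \<le> supnorm v"
  unfolding supnorm_def by (rule cSUP_upper) (auto simp: linf_iff bdd_above_def)

lemma supnorm_least: "(\<And>n. norm (v n) \<le> B) \<Longrightarrow> supnorm v \<le> B"
  unfolding supnorm_def by (rule cSUP_least) auto

definition unit_seq :: "int \<Rightarrow> int \<Rightarrow> complex" where
  "unit_seq k = (\<lambda>m. if m = k then 1 else 0)"

lemma unit_seq_self [simp]: "unit_seq k k = 1"
  by (simp add: unit_seq_def)

lemma unit_seq_linf: "unit_seq k \<in> linf"
  unfolding linf_iff unit_seq_def by (rule exI[of _ 1]) auto

lemma sum_unit_seq: "finite F \<Longrightarrow> (\<Sum>k\<in>F. c k * unit_seq k m) = (if m \<in> F then c m else 0)"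
  unfolding unit_seq_def by (simp add: if_distrib cong: if_cong)

lemma sum_unit_seq_linf: "finite F \<Longrightarrow> (\<lambda>m. \<Sum>k\<in>F. c k * unit_seq k m) \<in> linf"
  by (rule linf_if_bounded_off_finite[where B = 0]) (auto simp: sum_unit_seq)

lemma cnj_sgn_mult: "cnj (sgn z) * z = complex_of_real (norm z)"
proof (cases "z = 0")
  case False
  have "cnj (sgn z) * z = cnj z * z / complex_of_real (norm z)"
    by (simp add: sgn_div_norm scaleR_conv_of_real divide_inverse mult_ac)
  also have "cnj z * z = complex_of_real (norm z)^2"
    by (metis complex_norm_square mult.commute of_real_power)
  finally show ?thesis using False by (simp add: power2_eq_square)
qed simp

lemma has_max_if_finite_superlevel:
  fixes f :: "'a \<Rightarrow> real"
  assumes "finite {x. f x0 \<le> f x}"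
  obtains m where "\<And>x. f x \<le> f m"
proof -
  let ?M = "{x. f x0 \<le> f x}"
  have "Max (f ` ?M) \<in> f ` ?M" using assms by (intro Max_in) auto
  then obtain m where m: "m \<in> ?M" "f m = Max (f ` ?M)" by auto
  have "f x \<le> f m" for x
  proof (cases "x \<in> ?M")
    case True
    then show ?thesis using m assms by simp
  next
    case False
    then show ?thesis using m(1) by simp
  qed
  then show thesis by (rule that)
qed

lemma idempotent_convolution_support_nonpos:
  fixes a :: "int \<Rightarrow> 'a::idom"
  assumes fin: "finite {k. a k \<noteq> 0}"
    and conv: "\<And>n. a n = (\<Sum>k | a k \<noteq> 0. a k * a (n - k))"
    and k: "a k \<noteq> 0"
  shows "k \<le> 0"
proof -
  define S where "S = {k. a k \<noteq> 0}"
  define U where "U = Max S"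
  have "finite S" "S \<noteq> {}" using fin k by (auto simp: S_def)
  then have U: "U \<in> S" "\<And>j. j \<in> S \<Longrightarrow> j \<le> U" by (simp_all add: U_def)
  have "a (2 * U) = (\<Sum>j\<in>S. a j * a (2 * U - j))" unfolding S_def by (rule conv)
  also have "\<dots> = a U * a (2 * U - U) + (\<Sum>j\<in>S - {U}. a j * a (2 * U - j))"
    using fin U(1) by (simp add: S_def sum.remove)
  also have "(\<Sum>j\<in>S - {U}. a j * a (2 * U - j)) = 0"
  proof (intro sum.neutral ballI)
    fix j assume "j \<in> S - {U}"
    then have "U < 2 * U - j" using U(2) by force
    then have "2 * U - j \<notin> S" using U(2) by force
    then show "a j * a (2 * U - j) = 0" by (simp add: S_def)
  qed
  finally have "a (2 * U) = a U * a U" by simp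
  then have "2 * U \<in> S" using U(1) by (simp add: S_def)
  then have "2 * U \<le> U" by (rule U(2))
  moreover have "k \<le> U" using k by (intro U(2)) (simp add: S_def)
  ultimately show "k \<le> 0" by linarith
qed

lemma idempotent_convolution_finite_support:
  fixes a :: "int \<Rightarrow> 'a::idom"
  assumes fin: "finite {k. a k \<noteq> 0}" and nz: "a \<noteq> (\<lambda>_. 0)"
    and conv: "\<And>n. a n = (\<Sum>k | a k \<noteq> 0. a k * a (n - k))"
  shows "a = (\<lambda>n. if n = 0 then 1 else 0)"
proof -
  define b where "b n = a (- n)" for n
  have supp_b: "{k. b k \<noteq> 0} = uminus ` {k. a k \<noteq> 0}"
    by (auto simp: b_def image_iff) (metis minus_minus)
  have conv_b: "b n = (\<Sum>k | b k \<noteq> 0. b k * b (n - k))" for n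
    unfolding supp_b
    by (subst sum.reindex) (auto simp: b_def conv[of "-n"] inj_on_def intro!: sum.cong arg_cong[where f = a])
  have "finite {k. b k \<noteq> 0}" using fin supp_b by simp
  then have b_nonpos: "b k \<noteq> 0 \<Longrightarrow> k \<le> 0" for k
    by (rule idempotent_convolution_support_nonpos[OF _ conv_b])
  have supp: "a k \<noteq> 0 \<Longrightarrow> k = 0" for k
    using idempotent_convolution_support_nonpos[OF fin conv, of k] b_nonpos[of "- k"]
    by (simp add: b_def)
  obtain k where "a k \<noteq> 0" using nz by auto
  then have a0: "a 0 \<noteq> 0" using supp by blast
  with supp have supp0: "{k. a k \<noteq> 0} = {0}" by blast
  have "a 0 = (\<Sum>k | a k \<noteq> 0. a k * a (0 - k))" by (rule conv)
  also have "\<dots> = a 0 * a 0" by (simp add: supp0)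
  finally have "a 0 = a 0 * a 0" .
  with a0 have "a 0 = 1" by simp
  show ?thesis
  proof
    fix n
    show "a n = (if n = 0 then 1 else 0)" using supp \<open>a 0 = 1\<close> by (cases "n = 0") auto
  qed
qed

locale linf_contraction =
  fixes \<Phi> :: "(int \<Rightarrow> complex) \<Rightarrow> (int \<Rightarrow> complex)"
  assumes lin: "linear_on_linf \<Phi>"
    and contr: "\<forall>v\<in>linf. supnorm (\<Phi> v) \<le> supnorm v"
begin

lemma linf_closed: "v \<in> linf \<Longrightarrow> \<Phi> v \<in> linf"
  using lin unfolding linear_on_linf_def by blast

lemma add: "u \<in> linf \<Longrightarrow> v \<in> linf \<Longrightarrow> \<Phi> (\<lambda>n. u n + v n) = (\<lambda>n. \<Phi> u n + \<Phi> v n)"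
  using lin unfolding linear_on_linf_def by blast

lemma scale: "v \<in> linf \<Longrightarrow> \<Phi> (\<lambda>n. c * v n) = (\<lambda>n. c * \<Phi> v n)"
  using lin unfolding linear_on_linf_def by blast

lemma zero: "\<Phi> (\<lambda>n. 0) = (\<lambda>n. 0)"
proof -
  have "(\<lambda>n. 0) \<in> linf" by (auto simp: linf_iff)
  from scale[OF this, of 0] show ?thesis by simp
qed

lemma diff: "u \<in> linf \<Longrightarrow> v \<in> linf \<Longrightarrow> \<Phi> (\<lambda>n. u n - v n) = (\<lambda>n. \<Phi> u n - \<Phi> v n)"
  using add[of u "\<lambda>n. (-1) * v n"] scale[of v "-1"] linf_scale[of v "-1"] by simp

lemma norm_apply_le: "v \<in> linf \<Longrightarrow> norm (\<Phi> v n) \<le> supnorm v"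
  using supnorm_upper[OF linf_closed, of v n] contr by fastforce

lemma apply_eq_0_if_coordinate_eq_0:
  assumes fixes_unit: "\<Phi> (unit_seq n) = unit_seq n" and w: "w \<in> linf" "w n = 0"
  shows "\<Phi> w n = 0"
proof (rule ccontr)
  define c where "c = \<Phi> w n"
  define s where "s = supnorm w"
  assume "\<Phi> w n \<noteq> 0"
  then have c: "c \<noteq> 0" by (simp add: c_def)
  have "norm c \<le> s" unfolding c_def s_def by (rule norm_apply_le[OF w(1)])
  with c have s: "s > 0" by (meson less_le_trans zero_less_norm_iff)
  define u where "u = (\<lambda>m. unit_seq n m + cnj (sgn c) / s * w m)"
  have "norm (u m) \<le> 1" for m
  proof (cases "m = n")
    case False
    have "norm (w m) \<le> s" unfolding s_def by (rule supnorm_upper[OF w(1)])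
    with False c s show ?thesis by (simp add: u_def unit_seq_def norm_mult norm_divide norm_sgn)
  qed (simp add: u_def unit_seq_def w(2))
  then have "supnorm u \<le> 1" by (rule supnorm_least)
  moreover have "u \<in> linf" unfolding u_def by (intro linf_add unit_seq_linf linf_scale w(1))
  ultimately have "norm (\<Phi> u n) \<le> 1" using norm_apply_le[of u n] by simp
  moreover have "\<Phi> u n = \<Phi> (unit_seq n) n + cnj (sgn c) / s * \<Phi> w n"
    unfolding u_def by (simp only: add[OF unit_seq_linf linf_scale[OF w(1)]] scale[OF w(1)])
  then have "\<Phi> u n = complex_of_real (1 + norm c / s)"
    by (simp add: fixes_unit cnj_sgn_mult flip: c_def)
  ultimately have "\<bar>1 + norm c / s\<bar> \<le> 1" by (metis norm_of_real)
  moreover have "norm c / s > 0" using c s by simp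
  ultimately show False by arith
qed

lemma apply_coordinate_if_fixes_unit_seq:
  assumes fixes_unit: "\<Phi> (unit_seq n) = unit_seq n" and v: "v \<in> linf"
  shows "\<Phi> v n = v n"
proof -
  define w where "w = (\<lambda>m. v m - v n * unit_seq n m)"
  have w: "w \<in> linf" "w n = 0"
    unfolding w_def by (intro linf_diff v linf_scale unit_seq_linf) (simp add: unit_seq_def)
  have "\<Phi> w n = \<Phi> v n - v n * \<Phi> (unit_seq n) n"
    unfolding w_def by (simp only: diff[OF v linf_scale[OF unit_seq_linf]] scale[OF unit_seq_linf])
  with apply_eq_0_if_coordinate_eq_0[OF fixes_unit w] show ?thesis
    by (simp add: fixes_unit)
qed

end

locale shift_invariant_linf_contraction = linf_contraction +
  assumes comm: "\<forall>v\<in>linf. \<Phi> (bshift v) = bshift (\<Phi> v)"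
begin

definition \<kappa> :: "int \<Rightarrow> complex" where
  "\<kappa> = \<Phi> (unit_seq 0)"

lemma kernel_linf: "\<kappa> \<in> linf"
  unfolding \<kappa>_def by (rule linf_closed[OF unit_seq_linf])

lemma apply_unit_seq: "\<Phi> (unit_seq k) n = \<kappa> (n - k)"
proof -
  have shift: "\<Phi> (unit_seq (k - 1)) n = \<Phi> (unit_seq k) (n + 1)" for k n
  proof -
    have "bshift (unit_seq k) = unit_seq (k - 1)" unfolding bshift_def unit_seq_def by auto
    then show ?thesis using comm unit_seq_linf[of k] unfolding bshift_def by metis
  qed
  have "\<forall>n. \<Phi> (unit_seq k) n = \<kappa> (n - k)"
  proof (induction k rule: int_induct[where k = 0])
    case base
    then show ?case by (simp add: \<kappa>_def)
  next
    case (step1 i)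
    then show ?case using shift[of "i + 1"] by (metis add_diff_cancel diff_add_eq diff_diff_eq)
  next
    case (step2 i)
    then show ?case using shift[of i] by (simp add: algebra_simps)
  qed
  then show ?thesis by blast
qed

lemma apply_finite_comb:
  "finite F \<Longrightarrow> \<Phi> (\<lambda>m. \<Sum>k\<in>F. c k * unit_seq k m) = (\<lambda>n. \<Sum>k\<in>F. c k * \<kappa> (n - k))"
proof (induction F rule: finite_induct)
  case empty
  then show ?case using zero by simp
next
  case (insert x F)
  have "\<Phi> (\<lambda>m. \<Sum>k\<in>insert x F. c k * unit_seq k m)
      = \<Phi> (\<lambda>m. c x * unit_seq x m + (\<Sum>k\<in>F. c k * unit_seq k m))"
    using insert by simp
  also have "\<dots> = (\<lambda>n. c x * \<Phi> (unit_seq x) n + \<Phi> (\<lambda>m. \<Sum>k\<in>F. c k * unit_seq k m) n)"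
    by (simp add: add linf_scale unit_seq_linf sum_unit_seq_linf insert scale)
  finally show ?case using insert by (simp add: apply_unit_seq)
qed

lemma norm_apply_minus_convolution_le:
  assumes v: "v \<in> linf" and F: "finite F"
    and small: "\<And>m. m \<notin> F \<Longrightarrow> norm (v m) \<le> B" "B \<ge> 0"
  shows "norm (\<Phi> v n - (\<Sum>k\<in>F. v k * \<kappa> (n - k))) \<le> B"
proof -
  define t where "t = (\<lambda>m. v m - (\<Sum>k\<in>F. v k * unit_seq k m))"
  have t: "t \<in> linf" unfolding t_def by (intro linf_diff v sum_unit_seq_linf F)
  have "\<Phi> v n - (\<Sum>k\<in>F. v k * \<kappa> (n - k)) = \<Phi> t n"
    unfolding t_def by (simp add: diff v sum_unit_seq_linf F apply_finite_comb)
  also have "norm (\<Phi> t n) \<le> supnorm t" by (rule norm_apply_le[OF t])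
  also have "supnorm t \<le> B"
    by (rule supnorm_least) (auto simp: t_def sum_unit_seq F small)
  finally show ?thesis .
qed

lemma sum_norm_kernel_le_1: "finite F \<Longrightarrow> (\<Sum>j\<in>F. norm (\<kappa> j)) \<le> 1"
proof -
  assume F: "finite F"
  define v where "v = (\<lambda>m. \<Sum>k\<in>uminus ` F. cnj (sgn (\<kappa> (- k))) * unit_seq k m)"
  have "\<Phi> v 0 = (\<Sum>k\<in>uminus ` F. cnj (sgn (\<kappa> (- k))) * \<kappa> (- k))"
    unfolding v_def using apply_finite_comb[of "uminus ` F"] F by simp
  also have "\<dots> = complex_of_real (\<Sum>j\<in>F. norm (\<kappa> j))"
    by (subst sum.reindex) (simp_all add: inj_on_def cnj_sgn_mult)
  finally have eq: "norm (\<Phi> v 0) = \<bar>\<Sum>j\<in>F. norm (\<kappa> j)\<bar>"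
    by (simp only: norm_of_real)
  have "norm (\<Phi> v 0) \<le> supnorm v"
    unfolding v_def using F by (intro norm_apply_le sum_unit_seq_linf) simp
  also have "supnorm v \<le> 1"
    by (rule supnorm_least) (auto simp: v_def sum_unit_seq F norm_sgn)
  finally show ?thesis using eq by (simp add: abs_le_iff)
qed

lemma finite_kernel_superlevel: "e > 0 \<Longrightarrow> finite {j. e \<le> norm (\<kappa> j)}"
proof (rule ccontr)
  assume e: "e > 0" and inf: "infinite {j. e \<le> norm (\<kappa> j)}"
  obtain N :: nat where N: "real N > 1 / e" using reals_Archimedean2 by blast
  obtain F where F: "finite F" "F \<subseteq> {j. e \<le> norm (\<kappa> j)}" "card F = N"
    using infinite_arbitrarily_large[OF inf] by blast
  have "real N * e = (\<Sum>j\<in>F. e)" using F by simp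
  also have "\<dots> \<le> (\<Sum>j\<in>F. norm (\<kappa> j))" using F by (intro sum_mono) auto
  also have "\<dots> \<le> 1" by (rule sum_norm_kernel_le_1[OF F(1)])
  finally show False using N e by (simp add: field_simps)
qed

lemma annihilates_c0_if_kernel_zero:
  assumes kernel: "\<kappa> = (\<lambda>_. 0)" and v: "v \<in> c0"
  shows "\<Phi> v = (\<lambda>_. 0)"
proof
  fix n
  have "norm (\<Phi> v n) \<le> e" if e: "e > 0" for e
  proof -
    have "finite {m. e \<le> norm (v m)}" using v e unfolding c0_def by auto
    then have "norm (\<Phi> v n - (\<Sum>k | e \<le> norm (v k). v k * \<kappa> (n - k))) \<le> e"
      using v e by (intro norm_apply_minus_convolution_le) (auto simp: c0_subset_linf[THEN subsetD])
    then show ?thesis by (simp add: kernel)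
  qed
  then show "\<Phi> v n = 0" by (metis dense not_le norm_le_zero_iff)
qed

lemma identity_if_kernel_unit:
  assumes kernel: "\<kappa> = unit_seq 0" and v: "v \<in> linf"
  shows "\<Phi> v = v"
proof
  fix n
  have "\<Phi> (unit_seq n) = unit_seq n"
    by (intro ext) (simp add: apply_unit_seq kernel, simp add: unit_seq_def)
  then show "\<Phi> v n = v n" by (rule apply_coordinate_if_fixes_unit_seq[OF _ v])
qed

lemma fixed_kernel_peak:
  assumes fixed: "\<Phi> \<kappa> = \<kappa>" and peak: "\<And>j. norm (\<kappa> j) \<le> norm (\<kappa> n0)" and k: "\<kappa> k \<noteq> 0"
  shows "norm (\<kappa> (n0 - k)) = norm (\<kappa> n0)"
proof (rule ccontr)
  define p where "p = norm (\<kappa> n0)"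
  assume "norm (\<kappa> (n0 - k)) \<noteq> norm (\<kappa> n0)"
  then have lt: "norm (\<kappa> (n0 - k)) < p" using peak[of "n0 - k"] by (simp add: p_def)
  define \<delta> where "\<delta> = norm (\<kappa> k) * (p - norm (\<kappa> (n0 - k)))"
  have \<delta>: "\<delta> > 0" unfolding \<delta>_def using k lt by simp
  define F where "F = insert k {j. \<delta> / 2 \<le> norm (\<kappa> j)}"
  have F: "finite F" unfolding F_def using finite_kernel_superlevel[of "\<delta> / 2"] \<delta> by simp
  define conv where "conv = (\<Sum>j\<in>F. \<kappa> j * \<kappa> (n0 - j))"
  have "norm (\<Phi> \<kappa> n0 - conv) \<le> \<delta> / 2" unfolding conv_def
    by (rule norm_apply_minus_convolution_le[OF kernel_linf F]) (use \<delta> in \<open>auto simp: F_def\<close>)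
  then have approx: "norm (\<kappa> n0 - conv) \<le> \<delta> / 2" by (simp add: fixed)
  \<comment> \<open>\<open>|\<kappa> j| |\<kappa> (n0 - j)| \<le> p |\<kappa> j|\<close> for all \<open>j\<close>, with a loss of \<open>\<delta>\<close> at \<open>j = k\<close>\<close>
  have "norm conv \<le> (\<Sum>j\<in>F. norm (\<kappa> j) * norm (\<kappa> (n0 - j)))"
    unfolding conv_def by (rule order_trans[OF norm_sum]) (simp add: norm_mult)
  also have "\<dots> \<le> (\<Sum>j\<in>F. norm (\<kappa> j) * p - (if j = k then \<delta> else 0))"
  proof (rule sum_mono)
    fix j
    have "norm (\<kappa> j) * norm (\<kappa> (n0 - j)) \<le> norm (\<kappa> j) * p"
      using peak[of "n0 - j"] by (simp add: p_def mult_left_mono)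
    then show "norm (\<kappa> j) * norm (\<kappa> (n0 - j)) \<le> norm (\<kappa> j) * p - (if j = k then \<delta> else 0)"
      by (simp add: \<delta>_def algebra_simps)
  qed
  also have "\<dots> = (\<Sum>j\<in>F. norm (\<kappa> j)) * p - \<delta>"
    using F by (simp add: sum_subtractf sum_distrib_right F_def)
  also have "\<dots> \<le> p - \<delta>"
    using mult_right_mono[OF sum_norm_kernel_le_1[OF F], of p] by (simp add: p_def)
  finally have "norm conv \<le> p - \<delta>" .
  moreover have "p \<le> norm conv + norm (\<kappa> n0 - conv)"
    unfolding p_def by (rule norm_triangle_sub)
  ultimately show False using approx \<delta> by linarith
qed

lemma finite_support_if_kernel_fixed:
  assumes fixed: "\<Phi> \<kappa> = \<kappa>"
  shows "finite {j. \<kappa> j \<noteq> 0}"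
proof (cases "\<kappa> = (\<lambda>_. 0)")
  case False
  then obtain j0 where j0: "\<kappa> j0 \<noteq> 0" by auto
  then have "finite {j. norm (\<kappa> j0) \<le> norm (\<kappa> j)}" by (intro finite_kernel_superlevel) simp
  then obtain n0 where peak: "\<And>j. norm (\<kappa> j) \<le> norm (\<kappa> n0)"
    using has_max_if_finite_superlevel[where f = "\<lambda>j. norm (\<kappa> j)"] by blast
  have "norm (\<kappa> n0) > 0" using peak[of j0] j0 by (meson less_le_trans zero_less_norm_iff)
  then have "finite ((\<lambda>j. n0 - j) ` {j. norm (\<kappa> n0) \<le> norm (\<kappa> j)})"
    by (intro finite_imageI finite_kernel_superlevel)
  moreover have "{j. \<kappa> j \<noteq> 0} \<subseteq> (\<lambda>j. n0 - j) ` {j. norm (\<kappa> n0) \<le> norm (\<kappa> j)}"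
  proof
    fix k assume "k \<in> {j. \<kappa> j \<noteq> 0}"
    then have "norm (\<kappa> (n0 - k)) = norm (\<kappa> n0)" using fixed_kernel_peak[OF fixed peak] by simp
    then show "k \<in> (\<lambda>j. n0 - j) ` {j. norm (\<kappa> n0) \<le> norm (\<kappa> j)}"
      by (intro image_eqI[of _ _ "n0 - k"]) auto
  qed
  ultimately show ?thesis by (rule finite_subset[rotated])
qed simp

lemma kernel_eq_unit_if_fixed:
  assumes fixed: "\<Phi> \<kappa> = \<kappa>" and nz: "\<kappa> \<noteq> (\<lambda>_. 0)"
  shows "\<kappa> = unit_seq 0"
proof -
  have fin: "finite {j. \<kappa> j \<noteq> 0}" by (rule finite_support_if_kernel_fixed[OF fixed])
  have "\<kappa> n = (\<Sum>k | \<kappa> k \<noteq> 0. \<kappa> k * \<kappa> (n - k))" for n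
    using norm_apply_minus_convolution_le[OF kernel_linf fin, of 0 n] by (simp add: fixed)
  then show ?thesis unfolding unit_seq_def by (rule idempotent_convolution_finite_support[OF fin nz])
qed

end

theorem corollary2p4:
  fixes \<Phi> :: "(int \<Rightarrow> complex) \<Rightarrow> (int \<Rightarrow> complex)"
  assumes lin: "linear_on_linf \<Phi>"
    and comm: "\<forall>v\<in>linf. \<Phi> (bshift v) = bshift (\<Phi> v)"
    and idem: "\<forall>v\<in>linf. \<Phi> (\<Phi> v) = \<Phi> v"
    and contr: "\<forall>v\<in>linf. supnorm (\<Phi> v) \<le> supnorm v"
  shows "(\<forall>v\<in>c0. \<Phi> v = (\<lambda>n. 0)) \<or> (\<forall>v\<in>linf. \<Phi> v = v)"
proof -
  interpret shift_invariant_linf_contraction \<Phi>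
    using lin comm contr by unfold_locales
  show ?thesis
  proof (cases "\<kappa> = (\<lambda>_. 0)")
    case True
    then show ?thesis using annihilates_c0_if_kernel_zero by blast
  next
    case False
    have "\<Phi> \<kappa> = \<kappa>" unfolding \<kappa>_def using idem unit_seq_linf by blast
    then have "\<kappa> = unit_seq 0" using False by (rule kernel_eq_unit_if_fixed)
    then show ?thesis using identity_if_kernel_unit by blast
  qed
qed

end
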